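(* Let $q$ be a prime power, $V=\mathbb F_{q^2}^3$ with Hermitian form $\varphi(x,y)=x_1\bar y_3+x_3\bar y_1+x_2\bar y_2$ (where $\bar a=a^q$), let $\mathcal V$ be the set of isotropic $1$-spaces of $V$ (so $|\mathcal V|=q^3+1$), and let $G={\rm P\Gamma U}(3,q)$, the subgroup of ${\rm P\Gamma L}(3,q^2)$ preserving $\varphi$, acting on $\mathcal V$. Each non-degenerate $2$-space $L$ of $V$ contains exactly $q+1$ elements of $\mathcal V$; let $\Gamma\subset\binom{\mathcal V}{q+1}$ be the set of the subsets $L\cap\mathcal V$ for $L$ ranging over the non-degenerate $2$-spaces (the classical unital). Then $\Gamma$ is $G$-strongly incidence-transitive and has minimum distance $\delta(\Gamma)=q$.
   Context: $\Gamma$ is regarded as a code in the Johnson graph $J(q^3+1,q+1)$ (vertices: $(q+1)$-subsets of $\mathcal V$; adjacency: intersection of size $q$); $\delta(\Gamma)$ is the least graph distance between distinct codewords. $\Gamma$ is $G$-strongly incidence-transitive if $G$ leaves $\Gamma$ invariant, is transitive on $\Gamma$, and for $\gamma\in\Gamma$, $G_\gamma$ is transitive on $\gamma\times(\mathcal V\setminus\gamma)$. *)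

theory Defs
  imports "HOL-Computational_Algebra.Primes"
begin

type_synonym 'a vec3 = "'a \<times> 'a \<times> 'a"

definition vadd :: "'a::field vec3 \<Rightarrow> 'a vec3 \<Rightarrow> 'a vec3" where
  "vadd x y = (case x of (x1,x2,x3) \<Rightarrow> case y of (y1,y2,y3) \<Rightarrow> (x1+y1, x2+y2, x3+y3))"

definition smul :: "'a::field \<Rightarrow> 'a vec3 \<Rightarrow> 'a vec3" where
  "smul c x = (case x of (x1,x2,x3) \<Rightarrow> (c*x1, c*x2, c*x3))"

definition vzero :: "'a::field vec3" where "vzero = (0,0,0)"

definition hform :: "nat \<Rightarrow> 'a::field vec3 \<Rightarrow> 'a vec3 \<Rightarrow> 'a" where
  "hform q x y = (case x of (x1,x2,x3) \<Rightarrow> case y of (y1,y2,y3) \<Rightarrow>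
      x1 * y3 ^ q + x3 * y1 ^ q + x2 * y2 ^ q)"

definition span1 :: "'a::field vec3 \<Rightarrow> 'a vec3 set" where
  "span1 v = {smul c v | c. True}"

definition span2 :: "'a::field vec3 \<Rightarrow> 'a vec3 \<Rightarrow> 'a vec3 set" where
  "span2 u v = {vadd (smul a u) (smul b v) | a b. True}"

definition lin_indep2 :: "'a::field vec3 \<Rightarrow> 'a vec3 \<Rightarrow> bool" where
  "lin_indep2 u v \<longleftrightarrow> (\<forall>a b. vadd (smul a u) (smul b v) = vzero \<longrightarrow> a = 0 \<and> b = 0)"

definition iso_points :: "nat \<Rightarrow> 'a::field vec3 set set" where
  "iso_points q = {span1 v | v. v \<noteq> vzero \<and> hform q v v = 0}"

definition two_spaces :: "'a::field vec3 set set" where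
  "two_spaces = {span2 u v | u v. lin_indep2 u v}"

definition nondeg_two_spaces :: "nat \<Rightarrow> 'a::field vec3 set set" where
  "nondeg_two_spaces q = {L \<in> two_spaces.
      \<forall>x\<in>L. (\<forall>y\<in>L. hform q x y = 0) \<longrightarrow> x = vzero}"

definition unital :: "nat \<Rightarrow> 'a::field vec3 set set set" where
  "unital q = {{P \<in> iso_points q. P \<subseteq> L} | L. L \<in> nondeg_two_spaces q}"

definition field_aut :: "('a::field \<Rightarrow> 'a) \<Rightarrow> bool" where
  "field_aut \<sigma> \<longleftrightarrow> bij \<sigma> \<and> (\<forall>a b. \<sigma> (a + b) = \<sigma> a + \<sigma> b \<and> \<sigma> (a * b) = \<sigma> a * \<sigma> b)"

text \<open>Semilinear bijections of V preserving phi (up to a nonzero scalar and the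
  associated field automorphism): the elements of Gamma U(3,q) (with similitudes);
  modulo scalars these induce PGammaU(3,q).\<close>
definition semilinear_pres :: "nat \<Rightarrow> ('a::field vec3 \<Rightarrow> 'a vec3) \<Rightarrow> bool" where
  "semilinear_pres q f \<longleftrightarrow> bij f \<and> (\<exists>\<sigma>. field_aut \<sigma> \<and>
      (\<forall>x y. f (vadd x y) = vadd (f x) (f y)) \<and>
      (\<forall>c x. f (smul c x) = smul (\<sigma> c) (f x)) \<and>
      (\<exists>mu. mu \<noteq> 0 \<and> (\<forall>x y. hform q (f x) (f y) = mu * \<sigma> (hform q x y))))"

definition PGammaU :: "nat \<Rightarrow> ('a::field vec3 set \<Rightarrow> 'a vec3 set) set" where
  "PGammaU q = {(\<lambda>P. f ` P) | f. semilinear_pres q f}"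

definition strongly_incidence_transitive ::
    "('p \<Rightarrow> 'p) set \<Rightarrow> 'p set \<Rightarrow> 'p set set \<Rightarrow> bool" where
  "strongly_incidence_transitive G X \<Gamma> \<longleftrightarrow>
     (\<forall>g\<in>G. (\<lambda>\<gamma>. g ` \<gamma>) ` \<Gamma> = \<Gamma>) \<and>
     (\<forall>\<gamma>1\<in>\<Gamma>. \<forall>\<gamma>2\<in>\<Gamma>. \<exists>g\<in>G. g ` \<gamma>1 = \<gamma>2) \<and>
     (\<forall>\<gamma>\<in>\<Gamma>. \<forall>a\<in>\<gamma>. \<forall>b\<in>X - \<gamma>. \<forall>a'\<in>\<gamma>. \<forall>b'\<in>X - \<gamma>.
        \<exists>g\<in>G. g ` \<gamma> = \<gamma> \<and> g a = a' \<and> g b = b')"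

definition johnson_adj :: "nat \<Rightarrow> 'p set \<Rightarrow> 'p set \<Rightarrow> bool" where
  "johnson_adj k A B \<longleftrightarrow> card (A \<inter> B) + 1 = k"

definition johnson_dist :: "'p set \<Rightarrow> nat \<Rightarrow> 'p set \<Rightarrow> 'p set \<Rightarrow> nat" where
  "johnson_dist X k A B = (LEAST n. \<exists>p :: nat \<Rightarrow> 'p set. p 0 = A \<and> p n = B \<and>
      (\<forall>i\<le>n. p i \<subseteq> X \<and> card (p i) = k) \<and> (\<forall>i<n. johnson_adj k (p i) (p (Suc i))))"

definition min_dist :: "'p set \<Rightarrow> nat \<Rightarrow> 'p set set \<Rightarrow> nat" where
  "min_dist X k \<Gamma> = Min {johnson_dist X k A B | A B. A \<in> \<Gamma> \<and> B \<in> \<Gamma> \<and> A \<noteq> B}"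

end

theory Submission
  imports Defs "HOL-Number_Theory.Residues" "HOL-Computational_Algebra.Polynomial"
begin

text \<open>
  Call a basis (e, z, f) of V a frame with multiplier m \<in> F_q^* if e and f are isotropic,
  \<phi>(e,f) = \<phi>(z,z) = m and z is orthogonal to e and f. In frame coordinates \<phi> becomes m\<phi>,
  so any two frames are related by a linear similitude of \<phi>, i.e. by an element of
  P\<Gamma>U(3,q). Every non-degenerate plane L through an isotropic vector e carries a frame
  (e, z, f) with L = \<langle>e, f\<rangle>, and such a frame can be renormalised so that any prescribed
  isotropic point outside L becomes \<langle>a0 e + z + f\<rangle>, for a constant a0 with a0 + a0^q = -1.
  Hence P\<Gamma>U(3,q) is transitive on triples (block, point on it, point off it).

  In the Johnson graph the distance between two k-sets A, B is |A - B|. Every block has q + 1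
  points (the block of the plane x_2 = 0 consists of \<langle>(0,0,1)\<rangle> and the q points \<langle>(1,0,c)\<rangle>
  with c + c^q = 0), two distinct blocks share at most one point because two points span
  their plane, and distinct blocks through a common point exist. So \<delta>(\<Gamma>) = (q + 1) - 1 = q.
\<close>

section \<open>The field of order q^2 and its conjugation\<close>

lemma card_le_mult_card_image:
  assumes "finite A" "\<And>y. card {x\<in>A. f x = y} \<le> k"
  shows "card A \<le> k * card (f ` A)"
proof -
  have "card A = card (\<Union>y\<in>f ` A. {x\<in>A. f x = y})"
    by (rule arg_cong[where f = card]) blast
  also have "\<dots> \<le> (\<Sum>y\<in>f ` A. card {x\<in>A. f x = y})"
    by (rule card_UN_le) (use assms(1) in simp)
  also have "\<dots> \<le> (\<Sum>y\<in>f ` A. k)"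
    by (rule sum_mono) (use assms(2) in blast)
  finally show ?thesis
    by (simp add: mult.commute)
qed

lemma card_roots_power_plus_linear_le:
  fixes a c :: "'a::idom"
  assumes "n \<ge> 2"
  shows "card {x. x^n + a*x = c} \<le> n"
proof -
  define p where "p = monom (1::'a) n + [:-c, a:]"
  have "degree [:-c, a:] < degree (monom (1::'a) n)"
    using assms degree_pCons_le[of "-c" "[:a:]"] by (simp add: degree_monom_eq)
  then have "degree p = n"
    unfolding p_def by (subst degree_add_eq_left) (simp_all add: degree_monom_eq)
  moreover have "{x. x^n + a*x = c} = {x. poly p x = 0}"
    unfolding p_def by (auto simp: poly_monom algebra_simps)
  moreover have "p \<noteq> 0"
    using \<open>degree p = n\<close> assms by auto
  ultimately show ?thesis
    using card_poly_roots_bound[of p] by simp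
qed

text \<open>The library has this as finite_field_power_card_eq_same, but for the sort finite_field,
  which a type variable of sort {field, finite} is not known to inhabit.\<close>
lemma power_card_UNIV_eq_self:
  fixes x :: "'a::{field,finite}"
  shows "x ^ card (UNIV :: 'a set) = x"
proof (cases "x = 0")
  case True
  then show ?thesis
    using finite_UNIV_card_ge_0[where 'a='a] by simp
next
  case False
  let ?U = "UNIV - {0::'a}"
  have "x ^ card ?U * \<Prod>?U = (\<Prod>y\<in>?U. x * y)"
    by (simp add: prod.distrib)
  also have "\<dots> = \<Prod>?U"
    by (rule prod.reindex_bij_witness[of _ "\<lambda>y. y / x" "\<lambda>y. x * y"]) (use False in auto)
  finally have "x ^ card ?U = 1"
    by simp
  moreover have "card (UNIV :: 'a set) = Suc (card ?U)"
    using finite_UNIV_card_ge_0[where 'a='a] by (simp add: card_Diff_singleton)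
  ultimately show ?thesis
    by (metis mult.right_neutral power_Suc)
qed

locale unitary_field =
  fixes q :: nat and field_type :: "'a::{field,finite} itself"
  assumes q_ge_2: "q \<ge> 2"
    and conj_add: "\<And>x y::'a. (x + y)^q = x^q + y^q"
    and conj_conj: "\<And>x::'a. (x^q)^q = x"
    and card_field: "card (UNIV::'a set) = q^2"

lemma unitary_fieldI:
  assumes "\<exists>p k. prime p \<and> k > 0 \<and> q = p ^ k"
    and card: "card (UNIV :: 'a::{field,finite} set) = q ^ 2"
  shows "unitary_field TYPE('a) q"
proof
  obtain p k where pk: "prime p" "k > 0" "q = p ^ k"
    using assms(1) by blast
  have "p \<ge> 2"
    using pk(1) prime_ge_2_nat by blast
  then show "q \<ge> 2"
    using self_le_power[OF _ pk(2), of p] pk(3) by simp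
  have char_prime: "prime CHAR('a)"
    using finite_imp_CHAR_pos[where 'a='a] prime_CHAR_semidom by simp
  have "CHAR('a) dvd p ^ (2 * k)"
    using CHAR_dvd_CARD[where 'a='a] card pk(3) by (simp add: power_mult mult.commute)
  then have "CHAR('a) dvd p"
    using char_prime prime_dvd_power by blast
  then have "CHAR('a) = p"
    using char_prime pk(1) primes_dvd_imp_eq by blast
  then show "(x + y)^q = x^q + y^q" for x y :: 'a
    by (intro freshmans_dream') (use char_prime pk(3) in auto)
  show "(x^q)^q = x" for x :: 'a
    using power_card_UNIV_eq_self[of x] card by (simp add: power_mult power2_eq_square)
qed (fact card)

context unitary_field
begin

lemma conj_zero [simp]: "(0::'a)^q = 0"
  using q_ge_2 by simp

lemma conj_uminus: "(- x::'a)^q = - (x^q)"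
proof -
  have "x^q + (-x)^q = 0"
    using conj_add[of x "-x"] by simp
  then show ?thesis
    by (simp add: add_eq_0_iff)
qed

lemma conj_diff: "(x - y::'a)^q = x^q - y^q"
  using conj_add[of x "-y"] conj_uminus[of y] by simp

lemma conj_nonzero: "(x::'a) \<noteq> 0 \<Longrightarrow> x^q \<noteq> 0"
  using q_ge_2 by simp

definition Fq :: "'a set" where
  "Fq = {x. x^q = x}"

lemma card_Fq_le: "card Fq \<le> q"
proof -
  have "Fq = {x::'a. x^q + (-1)*x = 0}"
    unfolding Fq_def by auto
  then show ?thesis
    using card_roots_power_plus_linear_le[OF q_ge_2, of "-1" 0] by simp
qed

text \<open>The trace t \<mapsto> t + t^q has fibres of size at most q (they are roots of x^q + x - s), so
  on a field with q^2 elements its image has at least q elements.\<close>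
lemma q_le_card_trace_image: "q \<le> card (range (\<lambda>t::'a. t + t^q))"
proof -
  have "card (UNIV::'a set) \<le> q * card (range (\<lambda>t::'a. t + t^q))"
  proof (rule card_le_mult_card_image)
    show "card {x \<in> UNIV. x + x^q = s} \<le> q" for s :: 'a
      using card_roots_power_plus_linear_le[OF q_ge_2, of 1 s] by (simp add: add.commute)
  qed simp
  then show ?thesis
    using card_field q_ge_2 by (simp add: power2_eq_square)
qed

lemma trace_in_Fq: "t + t^q \<in> Fq"
  unfolding Fq_def by (simp add: conj_add conj_conj add.commute)

lemma trace_image: "range (\<lambda>t::'a. t + t^q) = Fq"
  using q_le_card_trace_image card_Fq_le trace_in_Fq
  by (intro card_seteq) auto

lemma card_Fq: "card Fq = q"
  using q_le_card_trace_image card_Fq_le by (simp add: trace_image)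

lemma trace_onto_Fq: "s^q = s \<Longrightarrow> \<exists>t::'a. t + t^q = s"
  using trace_image unfolding Fq_def by (metis (mono_tags, lifting) mem_Collect_eq rangeE)

lemma card_trace_kernel: "card {z::'a. z + z^q = 0} = q"
proof -
  let ?K = "{z::'a. z + z^q = 0}"
  have fibre: "card {x::'a. x + x^q = s} = card ?K" if s: "s \<in> Fq" for s
  proof -
    obtain x0 where x0: "x0 + x0^q = s"
      using trace_onto_Fq[of s] s unfolding Fq_def by blast
    have "{x::'a. x + x^q = s} = (\<lambda>z. z + x0) ` ?K"
    proof (intro Set.set_eqI iffI)
      fix x assume "x \<in> {x::'a. x + x^q = s}"
      then have "(x - x0) + (x - x0)^q = 0"
        using x0 by (simp add: conj_diff algebra_simps)
      then show "x \<in> (\<lambda>z. z + x0) ` ?K"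
        by (intro image_eqI[of _ _ "x - x0"]) auto
    next
      fix x assume "x \<in> (\<lambda>z. z + x0) ` ?K"
      then show "x \<in> {x::'a. x + x^q = s}"
        using x0 by (auto simp: conj_add algebra_simps)
    qed
    then show ?thesis
      by (simp add: card_image inj_on_def)
  qed
  have "(\<Union>s\<in>Fq. {x::'a. x + x^q = s}) = UNIV"
    using trace_in_Fq by blast
  then have "q * q = card (\<Union>s\<in>Fq. {x::'a. x + x^q = s})"
    using card_field by (simp add: power2_eq_square)
  also have "\<dots> = (\<Sum>s\<in>Fq. card {x::'a. x + x^q = s})"
    by (rule card_UN_disjoint) auto
  also have "\<dots> = q * card ?K"
    using fibre card_Fq by simp
  finally show ?thesis
    using q_ge_2 by simp
qed

text \<open>The norm x \<mapsto> x^(q+1) maps F^* onto F_q^*: its fibres have at most q + 1 elements and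
  (q + 1)(q - 1) = |F^*|.\<close>
lemma norm_onto_Fq_nonzero:
  assumes "c \<noteq> 0" "c^q = c"
  shows "\<exists>x::'a. x^(Suc q) = c"
proof -
  let ?A = "UNIV - {0::'a}"
  let ?N = "\<lambda>x::'a. x^(Suc q)"
  have sub: "?N ` ?A \<subseteq> Fq - {0}"
    unfolding Fq_def by (auto simp: power_mult_distrib conj_conj)
  have card_A: "card ?A \<le> Suc q * card (?N ` ?A)"
  proof (rule card_le_mult_card_image)
    show "card {x \<in> ?A. ?N x = y} \<le> Suc q" for y
    proof -
      have "{x \<in> ?A. ?N x = y} \<subseteq> {x. x^(Suc q) + 0*x = y}"
        by auto
      then show ?thesis
        using card_roots_power_plus_linear_le[of "Suc q" 0 y] q_ge_2
        by (meson card_mono finite le_trans le_SucI)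
    qed
  qed simp
  have "Suc q * (q - 1) = q * q - 1"
    using q_ge_2 by (cases q) (auto simp: algebra_simps)
  also have "\<dots> = card ?A"
    using card_field by (simp add: card_Diff_singleton power2_eq_square)
  also have "\<dots> \<le> Suc q * card (?N ` ?A)"
    by (fact card_A)
  finally have "q - 1 \<le> card (?N ` ?A)"
    by (simp only: Suc_mult_le_cancel1)
  moreover have "card (Fq - {0}) = q - 1"
    using card_Fq unfolding Fq_def by simp
  ultimately have "?N ` ?A = Fq - {0}"
    using card_seteq[OF finite sub] by linarith
  moreover have "c \<in> Fq - {0}"
    using assms unfolding Fq_def by auto
  ultimately show ?thesis
    by (metis imageE)
qed

lemma norm_onto_Fq: "c^q = c \<Longrightarrow> \<exists>x::'a. x^(Suc q) = c"
  using norm_onto_Fq_nonzero by (cases "c = 0") auto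

definition a0 :: 'a where
  "a0 = (SOME a. a + a^q + 1 = 0)"

lemma a0_trace: "a0 + a0^q + 1 = 0"
proof -
  obtain t :: 'a where "t + t^q = -1"
    using trace_onto_Fq[of "-1"] by (auto simp: conj_uminus)
  then have "\<exists>a::'a. a + a^q + 1 = 0"
    by (intro exI[of _ t]) simp
  then show ?thesis
    unfolding a0_def by (rule someI_ex)
qed

end

section \<open>Vectors, lines and planes\<close>

lemma vadd_triple [simp]: "vadd (a1,a2,a3) (b1,b2,b3) = (a1+b1, a2+b2, a3+b3)"
  by (simp add: vadd_def)

lemma smul_triple [simp]: "smul c (a1,a2,a3) = (c*a1, c*a2, c*a3)"
  by (simp add: smul_def)

lemma hform_triple [simp]: "hform q (a1,a2,a3) (b1,b2,b3) = a1 * b3^q + a3 * b1^q + a2 * b2^q"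
  by (simp add: hform_def)

lemma smul_smul: "smul a (smul b v) = smul (a*b) (v::'a::field vec3)"
  by (cases v) (simp add: algebra_simps)

lemma smul_one [simp]: "smul 1 (v::'a::field vec3) = v"
  by (cases v) simp

lemma smul_zero [simp]: "smul 0 (v::'a::field vec3) = vzero"
  by (cases v) (simp add: vzero_def)

lemma smul_vzero [simp]: "smul c (vzero::'a::field vec3) = vzero"
  by (simp add: vzero_def)

lemma vadd_vzero [simp]: "vadd v vzero = (v::'a::field vec3)" "vadd vzero v = v"
  by (cases v; simp add: vzero_def)+

lemma smul_eq_vzero_iff: "smul c (v::'a::field vec3) = vzero \<longleftrightarrow> c = 0 \<or> v = vzero"
  by (cases v) (auto simp: vzero_def)

lemma mem_span1_iff: "w \<in> span1 v \<longleftrightarrow> (\<exists>c. w = smul c v)"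
  unfolding span1_def by blast

lemma span1_self: "v \<in> span1 v"
  unfolding span1_def by (auto intro: exI[of _ 1])

lemma span1_smul: "c \<noteq> 0 \<Longrightarrow> span1 (smul c v) = span1 (v::'a::field vec3)"
  unfolding span1_def
proof (intro Set.set_eqI iffI)
  fix x assume "x \<in> {smul d (smul c v) |d. True}"
  then show "x \<in> {smul d v |d. True}"
    by (auto simp: smul_smul)
next
  fix x assume c: "c \<noteq> 0" and "x \<in> {smul d v |d. True}"
  then obtain d where "x = smul d v"
    by blast
  then have "x = smul (d/c) (smul c v)"
    using c by (simp add: smul_smul)
  then show "x \<in> {smul d (smul c v) |d. True}"
    by blast
qed

lemma span2_mem: "vadd (smul a u) (smul b v) \<in> span2 u v"
  unfolding span2_def by blast

lemma span2_closed:
  assumes "x \<in> span2 u v" "y \<in> span2 u v"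
  shows "vadd (smul a x) (smul b y) \<in> span2 u (v::'a::field vec3)"
proof -
  obtain a1 b1 where x: "x = vadd (smul a1 u) (smul b1 v)"
    using assms(1) unfolding span2_def by blast
  obtain a2 b2 where y: "y = vadd (smul a2 u) (smul b2 v)"
    using assms(2) unfolding span2_def by blast
  have "vadd (smul a x) (smul b y) = vadd (smul (a*a1 + b*a2) u) (smul (a*b1 + b*b2) v)"
    unfolding x y by (cases u; cases v) (simp add: algebra_simps)
  then show ?thesis
    using span2_mem by metis
qed

lemma span2_left: "u \<in> span2 u (v::'a::field vec3)"
  using span2_mem[of 1 u 0 v] by simp

lemma span2_right: "v \<in> span2 u (v::'a::field vec3)"
  using span2_mem[of 0 u 1 v] by simp

lemma span2_subset_span2: "e \<in> span2 u v \<Longrightarrow> y \<in> span2 u v \<Longrightarrow> span2 e y \<subseteq> span2 u (v::'a::field vec3)"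
  unfolding span2_def[of e y] using span2_closed by blast

lemma span1_subset_span2: "x \<in> span2 u v \<Longrightarrow> span1 x \<subseteq> span2 u (v::'a::field vec3)"
  unfolding span1_def using span2_closed[of x u v x _ 0] by auto

lemma lin_indep2_combination_nonzero:
  assumes "lin_indep2 u v" "a \<noteq> 0 \<or> b \<noteq> 0"
  shows "vadd (smul a u) (smul b v) \<noteq> vzero"
  using assms unfolding lin_indep2_def by blast

lemma lin_indep2_if_span1_neq:
  assumes "p \<noteq> vzero" "p' \<noteq> vzero" "span1 p \<noteq> span1 (p'::'a::field vec3)"
  shows "lin_indep2 p p'"
  unfolding lin_indep2_def
proof (intro allI impI)
  fix a b assume eq: "vadd (smul a p) (smul b p') = vzero"
  have "a = 0"
  proof (rule ccontr)
    assume a: "a \<noteq> 0"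
    have coord: "x = (-b/a) * y" if "a * x + b * y = 0" for x y
      using that a by (simp add: field_simps eq_neg_iff_add_eq_0)
    have p: "p = smul (-b/a) p'"
      using eq coord by (cases p; cases p') (simp add: vzero_def)
    then have "-b/a \<noteq> 0"
      using assms(1) by auto
    then show False
      using assms(3) p span1_smul by metis
  qed
  then show "a = 0 \<and> b = 0"
    using eq assms(2) by (simp add: smul_eq_vzero_iff)
qed

lemma span2_image: "span2 u v = (\<lambda>(a,b). vadd (smul a u) (smul b v)) ` UNIV"
  unfolding span2_def by (auto intro: image_eqI[of _ _ "(a, b)" for a b])

lemma card_UNIV_prod: "card (UNIV::('a \<times> 'b) set) = card (UNIV::'a set) * card (UNIV::'b set)"
  by (metis UNIV_Times_UNIV card_cartesian_product)

lemma card_span2: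
  assumes "lin_indep2 u (v::'a::{field,finite} vec3)"
  shows "card (span2 u v) = card (UNIV::'a set) * card (UNIV::'a set)"
proof -
  have "inj (\<lambda>(a,b). vadd (smul a u) (smul b v))"
  proof (rule injI, clarify)
    fix a b a' b' assume eq: "vadd (smul a u) (smul b v) = vadd (smul a' u) (smul b' v)"
    have "vadd (smul (a - a') u) (smul (b - b') v) = vzero"
      using eq by (cases u; cases v) (simp add: vzero_def algebra_simps)
    then show "a = a' \<and> b = b'"
      using assms unfolding lin_indep2_def by fastforce
  qed
  then show ?thesis
    unfolding span2_image by (simp add: card_image card_UNIV_prod)
qed

lemma span2_eq_span2:
  assumes "lin_indep2 u v" "lin_indep2 e f" "e \<in> span2 u v" "f \<in> span2 u (v::'a::{field,finite} vec3)"
  shows "span2 e f = span2 u v"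
proof (rule card_subset_eq)
  show "span2 e f \<subseteq> span2 u v"
    using span2_closed[OF assms(3,4)] unfolding span2_def by blast
  show "card (span2 e f) = card (span2 u v)"
    using card_span2[OF assms(1)] card_span2[OF assms(2)] by simp
qed simp

lemma span2_neq_UNIV: "\<exists>x. x \<notin> span2 u (v::'a::{field,finite} vec3)"
proof (rule ccontr)
  let ?n = "card (UNIV::'a set)"
  assume "\<nexists>x. x \<notin> span2 u v"
  then have "span2 u v = UNIV"
    by blast
  moreover have "card (span2 u v) \<le> card (UNIV :: ('a \<times> 'a) set)"
    unfolding span2_image by (rule card_image_le) simp
  ultimately have "?n * (?n * ?n) \<le> 1 * (?n * ?n)"
    by (simp add: card_UNIV_prod)
  moreover have "2 \<le> ?n"
    using card_mono[of UNIV "{0::'a, 1}"] by simp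
  ultimately show False
    by (subst (asm) mult_le_cancel2) simp
qed

section \<open>Semilinear maps preserving the form\<close>

definition points_on :: "nat \<Rightarrow> 'a::field vec3 set \<Rightarrow> 'a vec3 set set" where
  "points_on q L = {P \<in> iso_points q. P \<subseteq> L}"

lemma unital_eq: "unital q = {points_on q L | L. L \<in> nondeg_two_spaces q}"
  unfolding unital_def points_on_def by simp

lemma semilinear_presE:
  fixes f :: "'a::field vec3 \<Rightarrow> 'a vec3"
  assumes "semilinear_pres q f"
  obtains \<sigma> \<mu> where "bij f" "bij \<sigma>" "\<sigma> 0 = 0"
    "\<And>x y. f (vadd x y) = vadd (f x) (f y)" "\<And>c x. f (smul c x) = smul (\<sigma> c) (f x)"
    "\<mu> \<noteq> 0" "\<And>x y. hform q (f x) (f y) = \<mu> * \<sigma> (hform q x y)" "f vzero = vzero"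
proof -
  obtain \<sigma> \<mu> where f: "bij f" "field_aut \<sigma>" "\<forall>x y. f (vadd x y) = vadd (f x) (f y)"
      "\<forall>c x. f (smul c x) = smul (\<sigma> c) (f x)" "\<mu> \<noteq> 0" "\<forall>x y. hform q (f x) (f y) = \<mu> * \<sigma> (hform q x y)"
    using assms unfolding semilinear_pres_def by blast
  have "\<sigma> 0 = 0"
    using f(2) unfolding field_aut_def by (metis add_cancel_right_right)
  moreover have "f vzero = vzero"
    using f(4) \<open>\<sigma> 0 = 0\<close> by (metis smul_zero)
  ultimately show ?thesis
    using f that unfolding field_aut_def by blast
qed

lemma semilinear_pres_hform_eq_0_iff:
  assumes "semilinear_pres q f"
  shows "hform q (f x) (f y) = 0 \<longleftrightarrow> hform q x y = (0::'a::field)"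
proof -
  obtain \<sigma> \<mu> where "bij \<sigma>" "\<sigma> 0 = 0" "\<mu> \<noteq> 0" "\<And>x y. hform q (f x) (f y) = \<mu> * \<sigma> (hform q x y)"
    using semilinear_presE[OF assms] by metis
  then show ?thesis
    by (metis bij_is_inj injD mult_eq_0_iff)
qed

lemma semilinear_pres_image_span1:
  assumes "semilinear_pres q f"
  shows "f ` span1 v = span1 (f (v::'a::field vec3))"
proof -
  obtain \<sigma> where \<sigma>: "bij \<sigma>" "\<And>c x. f (smul c x) = smul (\<sigma> c) (f x)"
    using semilinear_presE[OF assms] by metis
  show ?thesis
    unfolding span1_def
  proof (intro Set.set_eqI iffI)
    fix x assume "x \<in> f ` {smul c v |c. True}"
    then show "x \<in> {smul c (f v) |c. True}"
      using \<sigma>(2) by blast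
  next
    fix x assume "x \<in> {smul c (f v) |c. True}"
    then obtain c where x: "x = smul c (f v)"
      by blast
    obtain c' where "\<sigma> c' = c"
      using \<sigma>(1) by (metis bij_pointE)
    then have "x = f (smul c' v)"
      using x \<sigma>(2) by simp
    then show "x \<in> f ` {smul c v |c. True}"
      by blast
  qed
qed

lemma semilinear_pres_image_span2:
  assumes "semilinear_pres q f"
  shows "f ` span2 u v = span2 (f u) (f (v::'a::field vec3))"
proof -
  obtain \<sigma> where \<sigma>: "bij \<sigma>" "\<And>c x. f (smul c x) = smul (\<sigma> c) (f x)"
      "\<And>x y. f (vadd x y) = vadd (f x) (f y)"
    using semilinear_presE[OF assms] by metis
  show ?thesis
    unfolding span2_def
  proof (intro Set.set_eqI iffI)
    fix x assume "x \<in> f ` {vadd (smul a u) (smul b v) |a b. True}"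
    then obtain a b where "x = f (vadd (smul a u) (smul b v))"
      by blast
    then have "x = vadd (smul (\<sigma> a) (f u)) (smul (\<sigma> b) (f v))"
      using \<sigma>(2,3) by simp
    then show "x \<in> {vadd (smul a (f u)) (smul b (f v)) |a b. True}"
      by blast
  next
    fix x assume "x \<in> {vadd (smul a (f u)) (smul b (f v)) |a b. True}"
    then obtain a b where x: "x = vadd (smul a (f u)) (smul b (f v))"
      by blast
    obtain a' b' where "\<sigma> a' = a" "\<sigma> b' = b"
      using \<sigma>(1) by (metis bij_pointE)
    then have "x = f (vadd (smul a' u) (smul b' v))"
      using x \<sigma>(2,3) by simp
    then show "x \<in> f ` {vadd (smul a u) (smul b v) |a b. True}"
      by blast
  qed
qed

lemma semilinear_pres_lin_indep2:
  assumes "semilinear_pres q f" "lin_indep2 u (v::'a::field vec3)"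
  shows "lin_indep2 (f u) (f v)"
  unfolding lin_indep2_def
proof (intro allI impI)
  obtain \<sigma> where \<sigma>: "bij f" "bij \<sigma>" "\<sigma> 0 = 0" "\<And>c x. f (smul c x) = smul (\<sigma> c) (f x)"
      "\<And>x y. f (vadd x y) = vadd (f x) (f y)" "f vzero = vzero"
    using semilinear_presE[OF assms(1)] by metis
  fix a b assume eq: "vadd (smul a (f u)) (smul b (f v)) = vzero"
  obtain a' b' where ab: "a = \<sigma> a'" "b = \<sigma> b'"
    using \<sigma>(2) by (metis bij_pointE)
  have "f (vadd (smul a' u) (smul b' v)) = f vzero"
    using eq ab \<sigma>(4-6) by simp
  then have "vadd (smul a' u) (smul b' v) = vzero"
    using \<sigma>(1) by (meson bij_is_inj injD)
  then show "a = 0 \<and> b = 0"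
    using assms(2) ab \<sigma>(3) unfolding lin_indep2_def by blast
qed

lemma semilinear_pres_nondeg_two_spaces:
  assumes "semilinear_pres q f" "L \<in> nondeg_two_spaces q"
  shows "f ` L \<in> nondeg_two_spaces q"
proof -
  obtain u v where L: "L = span2 u v" "lin_indep2 u v"
      and nondeg: "\<forall>x\<in>L. (\<forall>y\<in>L. hform q x y = 0) \<longrightarrow> x = vzero"
    using assms(2) unfolding nondeg_two_spaces_def two_spaces_def by blast
  have "f ` L \<in> two_spaces"
    unfolding two_spaces_def L(1) semilinear_pres_image_span2[OF assms(1)]
    using semilinear_pres_lin_indep2[OF assms(1) L(2)] by blast
  moreover have "x = vzero" if x: "x \<in> f ` L" and rad: "\<forall>y\<in>f ` L. hform q x y = 0" for x
  proof -
    obtain x' where x': "x' \<in> L" "x = f x'"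
      using x by blast
    have "x' = vzero"
      using nondeg x' rad semilinear_pres_hform_eq_0_iff[OF assms(1)] by blast
    then show ?thesis
      using x' semilinear_presE[OF assms(1)] by metis
  qed
  ultimately show ?thesis
    unfolding nondeg_two_spaces_def by blast
qed

lemma semilinear_pres_iso_points:
  assumes "semilinear_pres q f" "P \<in> iso_points q"
  shows "f ` P \<in> iso_points q"
proof -
  obtain v where v: "P = span1 v" "v \<noteq> vzero" "hform q v v = (0::'a::field)"
    using assms(2) unfolding iso_points_def by blast
  have "f v \<noteq> vzero"
    using v(2) semilinear_presE[OF assms(1)] by (metis bij_is_inj injD)
  moreover have "hform q (f v) (f v) = 0"
    using v(3) semilinear_pres_hform_eq_0_iff[OF assms(1)] by simp
  ultimately show ?thesis
    unfolding iso_points_def v(1) semilinear_pres_image_span1[OF assms(1)] by blast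
qed

lemma semilinear_pres_points_on:
  assumes "semilinear_pres q f"
  shows "(\<lambda>P. f ` P) ` points_on q L = points_on q (f ` (L::'a::field vec3 set))"
proof (intro Set.set_eqI iffI)
  have f: "bij f" "f vzero = vzero"
    using semilinear_presE[OF assms] by metis+
  show "Q \<in> points_on q (f ` L)" if "Q \<in> (\<lambda>P. f ` P) ` points_on q L" for Q
    using that semilinear_pres_iso_points[OF assms] unfolding points_on_def by auto
  fix Q assume Q: "Q \<in> points_on q (f ` L)"
  obtain w where w: "Q = span1 w" "w \<noteq> vzero" "hform q w w = 0" "Q \<subseteq> f ` L"
    using Q unfolding points_on_def iso_points_def by blast
  obtain v where v: "w = f v"
    using f(1) by (metis bij_pointE)
  have "v \<noteq> vzero" "hform q v v = 0"
    using w(2,3) v f(2) semilinear_pres_hform_eq_0_iff[OF assms] by auto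
  then have "span1 v \<in> iso_points q"
    unfolding iso_points_def by blast
  moreover have Qv: "Q = f ` span1 v"
    using w(1) v semilinear_pres_image_span1[OF assms] by simp
  moreover have "span1 v \<subseteq> L"
    using w(4) Qv f(1) by (simp add: bij_is_inj inj_image_subset_iff)
  ultimately show "Q \<in> (\<lambda>P. f ` P) ` points_on q L"
    unfolding points_on_def by blast
qed

section \<open>Distances in the Johnson graph\<close>

lemma johnson_path_card_Diff_le:
  assumes "finite X" "p 0 = A" "p n = B" "\<forall>i\<le>n. p i \<subseteq> X \<and> card (p i) = k"
    "\<forall>i<n. johnson_adj k (p i) (p (Suc i))"
  shows "card (A - B) \<le> n"
proof -
  have fin: "finite (p i)" if "i \<le> n" for i
    using assms(1,4) that finite_subset by blast
  have "card (A - p j) \<le> j" if "j \<le> n" for j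
    using that
  proof (induction j)
    case 0
    then show ?case
      using assms(2) by simp
  next
    case (Suc j)
    then have j: "j < n"
      by simp
    have "card (p j - p (Suc j)) = card (p j) - card (p j \<inter> p (Suc j))"
      using fin[of j] j by (intro card_Diff_subset_Int) auto
    then have step: "card (p j - p (Suc j)) = 1"
      using assms(4,5) j unfolding johnson_adj_def by (metis add_diff_cancel_left' less_imp_le_nat add.commute)
    have "card (A - p (Suc j)) \<le> card ((A - p j) \<union> (p j - p (Suc j)))"
      using fin[of 0] fin[of j] j assms(2) by (intro card_mono) auto
    also have "\<dots> \<le> card (A - p j) + card (p j - p (Suc j))"
      by (rule card_Un_le)
    finally show ?case
      using Suc j step by simp
  qed
  then show ?thesis
    using assms(3) by blast
qed

lemma johnson_exchange:
  assumes "finite A" "a \<in> A - B" "b \<in> B - A"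
  shows "card (insert b (A - {a})) = card A"
    and "johnson_adj (card A) A (insert b (A - {a}))"
    and "insert b (A - {a}) - B = (A - B) - {a}"
proof -
  have "card A \<ge> 1"
    using assms(1,2) by (metis DiffD1 card_0_eq empty_iff less_one not_le)
  then show "card (insert b (A - {a})) = card A"
    using assms by (simp add: card_Diff_singleton)
  have "A \<inter> insert b (A - {a}) = A - {a}"
    using assms(2,3) by auto
  then show "johnson_adj (card A) A (insert b (A - {a}))"
    unfolding johnson_adj_def using assms(1,2) \<open>card A \<ge> 1\<close> by (simp add: card_Diff_singleton)
  show "insert b (A - {a}) - B = (A - B) - {a}"
    using assms(3) by auto
qed

lemma johnson_path_exists:
  assumes "finite X" "A \<subseteq> X" "B \<subseteq> X" "card A = k" "card B = k"
  shows "\<exists>p. p 0 = A \<and> p (card (A - B)) = B \<and> (\<forall>i\<le>card (A - B). p i \<subseteq> X \<and> card (p i) = k)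
     \<and> (\<forall>i<card (A - B). johnson_adj k (p i) (p (Suc i)))"
  using assms
proof (induction "card (A - B)" arbitrary: A)
  case 0
  then have "finite A" "finite B"
    using finite_subset by blast+
  then have "A = B"
    using 0 by (intro card_subset_eq) auto
  then show ?case
    using 0 by (intro exI[of _ "\<lambda>_. A"]) auto
next
  case (Suc n A)
  have fin: "finite A" "finite B"
    using Suc.prems finite_subset by blast+
  obtain a where a: "a \<in> A - B"
    using Suc.hyps(2) by (metis card.empty ex_in_conv nat.distinct(1))
  have "card (B - A) = card (A - B)"
    using fin Suc.prems(4,5) by (simp add: card_Diff_subset_Int Int_commute)
  then obtain b where b: "b \<in> B - A"
    using Suc.hyps(2) by (metis card.empty ex_in_conv nat.distinct(1))
  define A' where "A' = insert b (A - {a})"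
  note exchange = johnson_exchange[OF fin(1) a b, folded A'_def]
  have n: "n = card (A' - B)"
    using Suc.hyps(2) a fin exchange(3) by simp
  have A'_X: "A' \<subseteq> X"
    unfolding A'_def using a b Suc.prems(2,3) by auto
  obtain p where p: "p 0 = A'" "p n = B" "\<forall>i\<le>n. p i \<subseteq> X \<and> card (p i) = k"
      "\<forall>i<n. johnson_adj k (p i) (p (Suc i))"
    using Suc.hyps(1)[OF n Suc.prems(1) A'_X Suc.prems(3) _ Suc.prems(5)] exchange(1) Suc.prems(4)
    unfolding n[symmetric] by blast
  have AB: "card (A - B) = Suc n"
    using Suc.hyps(2) by simp
  define p' where "p' i = (if i = 0 then A else p (i - 1))" for i
  have "p' i \<subseteq> X \<and> card (p' i) = k" if "i \<le> Suc n" for i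
    using that p(3) Suc.prems(2,4) unfolding p'_def by (cases i) auto
  moreover have "johnson_adj k (p' i) (p' (Suc i))" if "i < Suc n" for i
    using that p(1,4) exchange(2) Suc.prems(4) unfolding p'_def by (cases i) auto
  moreover have "p' 0 = A" "p' (Suc n) = B"
    using p(2) unfolding p'_def by simp_all
  ultimately show ?case
    unfolding AB by blast
qed

lemma johnson_dist_eq_card_Diff:
  assumes "finite X" "A \<subseteq> X" "B \<subseteq> X" "card A = k" "card B = k"
  shows "johnson_dist X k A B = card (A - B)"
  unfolding johnson_dist_def
proof (rule Least_equality)
  show "\<exists>p. p 0 = A \<and> p (card (A - B)) = B \<and> (\<forall>i\<le>card (A - B). p i \<subseteq> X \<and> card (p i) = k)
      \<and> (\<forall>i<card (A - B). johnson_adj k (p i) (p (Suc i)))"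
    by (rule johnson_path_exists[OF assms])
qed (use johnson_path_card_Diff_le[OF assms(1)] in blast)

section \<open>The Hermitian form and unitary frames\<close>

context unitary_field
begin

abbreviation H :: "'a vec3 \<Rightarrow> 'a vec3 \<Rightarrow> 'a" where
  "H \<equiv> hform q"

lemma H_vadd_left: "H (vadd x y) z = H x z + H y z"
  by (cases x; cases y; cases z) (simp add: algebra_simps)

lemma H_vadd_right: "H z (vadd x y) = H z x + H z y"
  by (cases x; cases y; cases z) (simp add: algebra_simps conj_add)

lemma H_smul_left: "H (smul c x) y = c * H x y"
  by (cases x; cases y) (simp add: algebra_simps)

lemma H_smul_right: "H x (smul c y) = c^q * H x y"
  by (cases x; cases y) (simp add: algebra_simps power_mult_distrib)

lemma H_swap: "H y x = (H x y)^q"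
  by (cases x; cases y) (simp add: algebra_simps power_mult_distrib conj_add conj_conj)

lemma H_self_in_Fq: "(H x x)^q = H x x"
  using H_swap[of x x] by simp

lemma H_vzero_left [simp]: "H vzero y = 0"
  by (cases y) (simp add: vzero_def)

lemma H_vzero_right [simp]: "H y vzero = 0"
  by (cases y) (simp add: vzero_def)

lemmas H_linear = H_vadd_left H_vadd_right H_smul_left H_smul_right

lemma H_radical_eq_vzero:
  assumes "\<And>y. H x y = 0"
  shows "x = vzero"
proof -
  have "H x (1,0,0) = 0" "H x (0,1,0) = 0" "H x (0,0,1) = 0"
    using assms by blast+
  then show ?thesis
    by (cases x) (simp add: vzero_def)
qed

lemma H_span2_left_eq_0:
  assumes "x \<in> span2 u v" "H u w = 0" "H v w = 0"
  shows "H x w = 0"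
  using assms unfolding span2_def by (auto simp: H_linear)

definition lincomb3 :: "'a vec3 \<Rightarrow> 'a vec3 \<Rightarrow> 'a vec3 \<Rightarrow> 'a vec3 \<Rightarrow> 'a vec3" where
  "lincomb3 e z f x = (case x of (x1,x2,x3) \<Rightarrow> vadd (vadd (smul x1 e) (smul x2 z)) (smul x3 f))"

lemma lincomb3_triple: "lincomb3 e z f (x1,x2,x3) = vadd (vadd (smul x1 e) (smul x2 z)) (smul x3 f)"
  by (simp add: lincomb3_def)

lemma lincomb3_vadd: "lincomb3 e z f (vadd x y) = vadd (lincomb3 e z f x) (lincomb3 e z f y)"
  by (cases x; cases y; cases e; cases z; cases f) (simp add: lincomb3_def algebra_simps)

lemma lincomb3_smul: "lincomb3 e z f (smul c x) = smul c (lincomb3 e z f x)"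
  by (cases x; cases e; cases z; cases f) (simp add: lincomb3_def algebra_simps)

lemma lincomb3_first: "lincomb3 e z f (1,0,0) = e"
  by (cases e; cases z; cases f) (simp add: lincomb3_def)

lemma lincomb3_third: "lincomb3 e z f (0,0,1) = f"
  by (cases e; cases z; cases f) (simp add: lincomb3_def)

text \<open>A basis in which \<phi> has the same Gram matrix as the standard basis, up to the factor m.\<close>
definition unitary_frame :: "'a vec3 \<Rightarrow> 'a vec3 \<Rightarrow> 'a vec3 \<Rightarrow> 'a \<Rightarrow> bool" where
  "unitary_frame e z f m \<longleftrightarrow> m \<noteq> 0 \<and> m^q = m \<and> H e e = 0 \<and> H f f = 0 \<and> H e f = m \<and> H z z = m
     \<and> H e z = 0 \<and> H f z = 0"

lemma unitary_frameD:
  assumes "unitary_frame e z f m"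
  shows "H e e = 0" "H f f = 0" "H e f = m" "H z z = m" "H e z = 0" "H f z = 0"
    "H f e = m" "H z e = 0" "H z f = 0" "m \<noteq> 0" "m^q = m"
  using assms unfolding unitary_frame_def by (auto simp: H_swap[of f e] H_swap[of e z] H_swap[of f z])

lemma H_lincomb3:
  assumes "unitary_frame e z f m"
  shows "H (lincomb3 e z f x) (lincomb3 e z f y) = m * H x y"
proof -
  obtain x1 x2 x3 y1 y2 y3 where "x = (x1,x2,x3)" "y = (y1,y2,y3)"
    by (cases x; cases y)
  then show ?thesis
    using unitary_frameD[OF assms]
    by (simp add: lincomb3_triple H_vadd_left H_vadd_right H_smul_left H_smul_right algebra_simps)
qed

lemma inj_lincomb3:
  assumes "unitary_frame e z f m"
  shows "inj (lincomb3 e z f)"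
proof (rule injI)
  fix x y assume eq: "lincomb3 e z f x = lincomb3 e z f y"
  have "m * H x w = m * H y w" for w
    by (metis eq H_lincomb3[OF assms])
  then have "H x w = H y w" for w
    using unitary_frameD(10)[OF assms] by simp
  from this[of "(1,0,0)"] this[of "(0,1,0)"] this[of "(0,0,1)"] show "x = y"
    by (cases x; cases y) simp
qed

lemma bij_lincomb3: "unitary_frame e z f m \<Longrightarrow> bij (lincomb3 e z f)"
  using inj_lincomb3 finite_UNIV_inj_surj[of "lincomb3 e z f"] by (simp add: bij_def)

lemma unitary_frame_lin_indep2:
  assumes "unitary_frame e z f m"
  shows "lin_indep2 e f"
  unfolding lin_indep2_def
proof (intro allI impI)
  fix a b assume "vadd (smul a e) (smul b f) = vzero"
  then have "H (vadd (smul a e) (smul b f)) f = 0" "H (vadd (smul a e) (smul b f)) e = 0"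
    by simp_all
  then have "a * m = 0" "b * m = 0"
    using unitary_frameD[OF assms] by (simp_all add: H_linear)
  then show "a = 0 \<and> b = 0"
    using unitary_frameD(10)[OF assms] by simp
qed

definition linear_similitude :: "('a vec3 \<Rightarrow> 'a vec3) \<Rightarrow> 'a \<Rightarrow> bool" where
  "linear_similitude g m \<longleftrightarrow> bij g \<and> m \<noteq> 0 \<and> (\<forall>x y. g (vadd x y) = vadd (g x) (g y)) \<and>
     (\<forall>c x. g (smul c x) = smul c (g x)) \<and> (\<forall>x y. H (g x) (g y) = m * H x y)"

lemma linear_similitude_lincomb3:
  assumes "unitary_frame e z f m"
  shows "linear_similitude (lincomb3 e z f) m"
  unfolding linear_similitude_def
  using bij_lincomb3[OF assms] lincomb3_vadd lincomb3_smul H_lincomb3[OF assms] unitary_frameD(10)[OF assms]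
  by blast

lemma linear_similitude_comp_inv:
  assumes "linear_similitude g1 m1" "linear_similitude g2 m2"
  shows "linear_similitude (g2 \<circ> inv_into UNIV g1) (m2 / m1)"
proof -
  have g1: "bij g1" "m1 \<noteq> 0" "\<And>x y. g1 (vadd x y) = vadd (g1 x) (g1 y)"
      "\<And>c x. g1 (smul c x) = smul c (g1 x)" "\<And>x y. H (g1 x) (g1 y) = m1 * H x y"
    using assms(1) unfolding linear_similitude_def by auto
  have g2: "bij g2" "m2 \<noteq> 0" "\<And>x y. g2 (vadd x y) = vadd (g2 x) (g2 y)"
      "\<And>c x. g2 (smul c x) = smul c (g2 x)" "\<And>x y. H (g2 x) (g2 y) = m2 * H x y"
    using assms(2) unfolding linear_similitude_def by auto
  have g1_inv: "g1 (inv_into UNIV g1 x) = x" "inv_into UNIV g1 (g1 x) = x" for x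
    using g1(1) by (simp_all add: bij_is_surj surj_f_inv_f bij_is_inj)
  have "inv_into UNIV g1 (vadd x y) = vadd (inv_into UNIV g1 x) (inv_into UNIV g1 y)" for x y
  proof -
    have "g1 (vadd (inv_into UNIV g1 x) (inv_into UNIV g1 y)) = vadd x y"
      by (simp add: g1(3) g1_inv)
    then show ?thesis
      by (metis g1_inv(2))
  qed
  moreover have "inv_into UNIV g1 (smul c x) = smul c (inv_into UNIV g1 x)" for c x
  proof -
    have "g1 (smul c (inv_into UNIV g1 x)) = smul c x"
      by (simp add: g1(4) g1_inv)
    then show ?thesis
      by (metis g1_inv(2))
  qed
  moreover have "H (inv_into UNIV g1 x) (inv_into UNIV g1 y) = H x y / m1" for x y
    using g1(5)[of "inv_into UNIV g1 x" "inv_into UNIV g1 y"] g1(2) by (simp add: g1_inv)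
  moreover have "bij (g2 \<circ> inv_into UNIV g1)"
    using g1(1) g2(1) bij_comp bij_imp_bij_inv by blast
  ultimately show ?thesis
    unfolding linear_similitude_def using g1(2) g2 by simp
qed

lemma linear_similitude_semilinear_pres: "linear_similitude g m \<Longrightarrow> semilinear_pres q g"
  unfolding linear_similitude_def semilinear_pres_def
  by (intro conjI exI[of _ id]) (auto simp: field_aut_def)

lemma H_lincomb3_left: "H (lincomb3 e z f (c1,c2,c3)) w = c1 * H e w + c2 * H z w + c3 * H f w"
  by (simp add: lincomb3_triple H_linear)

lemma H_lincomb3_right: "H w (lincomb3 e z f (c1,c2,c3)) = c1^q * H w e + c2^q * H w z + c3^q * H w f"
  by (simp add: lincomb3_triple H_linear)

lemma exists_isotropic_in_span2:
  assumes "lin_indep2 u v"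
  shows "\<exists>e\<in>span2 u v. e \<noteq> vzero \<and> H e e = 0"
proof (cases "H u u = 0")
  case True
  moreover have "u \<noteq> vzero"
    using lin_indep2_combination_nonzero[OF assms, of 1 0] by simp
  ultimately show ?thesis
    using span2_left by blast
next
  case huu: False
  define k where "k = H v u / H u u"
  define v' where "v' = vadd (smul (-k) u) v"
  have hv'u: "H v' u = 0"
    unfolding v'_def k_def using huu by (simp add: H_linear)
  have hu'v: "H u v' = 0"
    using hv'u H_swap[of u v'] by simp
  define c where "c = - H v' v' / H u u"
  have "c^q = c"
    unfolding c_def using H_self_in_Fq[of v'] H_self_in_Fq[of u] by (simp add: conj_uminus power_divide)
  then obtain x where x: "x^(Suc q) = c"
    using norm_onto_Fq by blast
  define w where "w = vadd (smul (x - k) u) (smul 1 v)"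
  have w: "w = vadd (smul x u) v'"
    unfolding w_def v'_def by (cases u; cases v) (simp add: algebra_simps)
  have "H w w = x * x^q * H u u + x * H u v' + x^q * H v' u + H v' v'"
    unfolding w by (simp only: H_linear) (simp add: distrib_left mult.assoc add.assoc)
  also have "\<dots> = c * H u u + H v' v'"
    using x hv'u hu'v by (simp add: mult.commute)
  also have "\<dots> = 0"
    unfolding c_def using huu by simp
  finally show ?thesis
    using span2_mem[of "x - k" u 1 v] lin_indep2_combination_nonzero[OF assms, of "x - k" 1]
    unfolding w_def by auto
qed

text \<open>The orthogonal complement of a hyperbolic pair is anisotropic: otherwise z, being orthogonal
  to the basis (e, z, y) of V, would lie in the radical of \<phi>.\<close>
lemma H_self_neq_0_if_orthogonal_to_hyperbolic_pair:
  assumes "H e e = 0" "H e y \<noteq> 0" "H z e = 0" "H z y = 0" "z \<noteq> vzero"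
  shows "H z z \<noteq> 0"
proof
  assume hzz: "H z z = 0"
  have hye: "H y e \<noteq> 0"
    using assms(2) H_swap[of y e] conj_nonzero by metis
  have "inj (lincomb3 e z y)"
  proof (rule injI)
    fix a b assume eq: "lincomb3 e z y a = lincomb3 e z y b"
    obtain a1 a2 a3 b1 b2 b3 where ab: "a = (a1,a2,a3)" "b = (b1,b2,b3)"
      by (cases a; cases b)
    have "H (lincomb3 e z y a) e = H (lincomb3 e z y b) e"
      using eq by simp
    then have 3: "a3 = b3"
      using assms hye unfolding ab H_lincomb3_left by simp
    have "H (lincomb3 e z y a) y = H (lincomb3 e z y b) y"
      using eq by simp
    then have 1: "a1 = b1"
      using assms 3 unfolding ab H_lincomb3_left by simp
    have "smul a2 z = smul b2 z"
      using eq unfolding ab lincomb3_triple 1 3 by (cases e; cases z; cases y) simp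
    then have "a2 = b2"
      using assms(5) by (cases z) (auto simp: vzero_def)
    then show "a = b"
      using ab 1 3 by simp
  qed
  then have "surj (lincomb3 e z y)"
    using finite_UNIV_inj_surj[of "lincomb3 e z y"] by simp
  have "H z w = 0" for w
  proof -
    obtain c1 c2 c3 where "w = lincomb3 e z y (c1,c2,c3)"
      using \<open>surj (lincomb3 e z y)\<close> by (metis surjD prod_cases3)
    then show ?thesis
      using assms(3,4) hzz by (simp add: H_lincomb3_right)
  qed
  then show False
    using H_radical_eq_vzero assms(5) by blast
qed

lemma exists_vector_orthogonal_to_pair:
  assumes "H e e = 0" "H e y \<noteq> 0"
  shows "\<exists>z. z \<notin> span2 e y \<and> H z e = 0 \<and> H z y = 0"
proof -
  have hye: "H y e \<noteq> 0"
    using assms(2) H_swap[of y e] conj_nonzero by metis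
  obtain x where x: "x \<notin> span2 e y"
    using span2_neq_UNIV by blast
  define \<beta> where "\<beta> = H x e / H y e"
  define \<alpha> where "\<alpha> = (H x y - \<beta> * H y y) / H e y"
  define z where "z = vadd x (vadd (smul (-\<alpha>) e) (smul (-\<beta>) y))"
  have "H z e = 0"
    unfolding z_def using hye assms(1) by (simp add: H_linear \<beta>_def)
  moreover have "H z y = 0"
    unfolding z_def using assms(2) by (simp only: H_linear) (simp add: \<alpha>_def field_simps)
  moreover have "z \<notin> span2 e y"
  proof
    assume "z \<in> span2 e y"
    then have "vadd (smul 1 z) (smul 1 (vadd (smul \<alpha> e) (smul \<beta> y))) \<in> span2 e y"
      by (rule span2_closed) (rule span2_mem)
    moreover have "vadd (smul 1 z) (smul 1 (vadd (smul \<alpha> e) (smul \<beta> y))) = x"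
      unfolding z_def by (cases x; cases e; cases y) (simp add: algebra_simps)
    ultimately have "x \<in> span2 e y"
      by simp
    then show False
      using x by simp
  qed
  ultimately show ?thesis
    by blast
qed

lemma exists_isotropic_partner:
  assumes "H e e = 0" "H e y \<noteq> 0" "m \<noteq> 0" "m^q = m"
  shows "\<exists>f\<in>span2 e y. H f f = 0 \<and> H e f = m"
proof -
  define c where "c = (m / H e y)^q"
  define y1 where "y1 = smul c y"
  have hey1: "H e y1 = m"
    unfolding y1_def c_def using assms(2) by (simp add: H_smul_right conj_conj)
  have hy1e: "H y1 e = m"
    using hey1 H_swap[of y1 e] assms(4) by simp
  define s where "s = H y1 y1"
  have "(-s/m)^q = -s/m"
    unfolding s_def using H_self_in_Fq[of y1] assms(4) by (simp add: conj_uminus power_divide)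
  then obtain t where t: "t + t^q = -s/m"
    using trace_onto_Fq by blast
  define f where "f = vadd (smul t e) (smul c y)"
  have f: "f = vadd y1 (smul t e)"
    unfolding f_def y1_def by (cases e; cases y) (simp add: algebra_simps)
  have "H f f = s + m * (t + t^q)"
    unfolding f s_def using hey1 hy1e assms(1) by (simp add: H_linear algebra_simps)
  also have "\<dots> = 0"
    using t assms(3) by simp
  finally have "H f f = 0" .
  moreover have "H e f = m"
    unfolding f using hey1 assms(1) by (simp add: H_linear)
  moreover have "f \<in> span2 e y"
    unfolding f_def by (rule span2_mem)
  ultimately show ?thesis
    by blast
qed

lemma exists_unitary_frame:
  assumes L: "L \<in> nondeg_two_spaces q" and e: "e \<in> L" "e \<noteq> vzero" "H e e = 0"
  shows "\<exists>z f m. unitary_frame e z f m \<and> span2 e f = L"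
proof -
  obtain u v where uv: "L = span2 u v" "lin_indep2 u v"
      and nondeg: "\<forall>x\<in>L. (\<forall>y\<in>L. H x y = 0) \<longrightarrow> x = vzero"
    using L unfolding nondeg_two_spaces_def two_spaces_def by blast
  obtain y where y: "y \<in> L" "H e y \<noteq> 0"
    using nondeg e by blast
  obtain z where z: "z \<notin> span2 e y" "H z e = 0" "H z y = 0"
    using exists_vector_orthogonal_to_pair[OF e(3) y(2)] by blast
  define m where "m = H z z"
  have "z \<noteq> vzero"
    using z(1) span2_mem[of 0 e 0 y] by auto
  then have m: "m \<noteq> 0" "m^q = m"
    unfolding m_def using H_self_neq_0_if_orthogonal_to_hyperbolic_pair[OF e(3) y(2) z(2,3)] H_self_in_Fq
    by auto
  obtain f where f: "f \<in> span2 e y" "H f f = 0" "H e f = m"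
    using exists_isotropic_partner[OF e(3) y(2) m] by blast
  have "H f z = 0"
    using H_span2_left_eq_0[OF f(1)] z(2,3) H_swap[of z e] H_swap[of z y] by simp
  then have fr: "unitary_frame e z f m"
    unfolding unitary_frame_def using m e(3) f(2,3) m_def z(2) H_swap[of z e] by simp
  have "f \<in> L"
    using f(1) span2_subset_span2 e(1) y(1) uv(1) by blast
  then have "span2 e f = L"
    using span2_eq_span2[OF uv(2) unitary_frame_lin_indep2[OF fr]] e(1) uv(1) by simp
  then show ?thesis
    using fr by blast
qed

lemma unitary_frame_renormalise:
  assumes fr: "unitary_frame e z f m" and "\<kappa> * \<beta>^q = 1" "t + t^q = 0"
  shows "unitary_frame (smul \<kappa> e) z (smul \<beta> (vadd f (smul t e))) m"
proof -
  note H = unitary_frameD[OF fr]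
  have "H (vadd f (smul t e)) (vadd f (smul t e)) = m * (t + t^q)"
    using H by (simp only: H_linear) (simp add: algebra_simps)
  moreover have "H e (vadd f (smul t e)) = m"
    using H by (simp only: H_linear) simp
  ultimately show ?thesis
    unfolding unitary_frame_def using H assms(2,3)
    by (simp only: H_smul_left H_smul_right H_vadd_left) (simp add: mult.assoc mult.left_commute)
qed

text \<open>If the isotropic vector (\<alpha>, 1, \<beta>) of frame coordinates is to become (a0, 1, 1) in a
  renormalised frame, the scalings are \<kappa> = \<beta>^(-q) on e and \<beta> on f, and f is sheared by t e.
  The shear preserves isotropy of f iff t + t^q = 0, which unfolds to
  \<alpha> \<beta>^q + \<beta> \<alpha>^q = a0 + a0^q; both sides equal -1.\<close>
lemma renormalising_shift_trace_0:
  assumes iso: "\<alpha> * \<beta>^q + \<beta> * \<alpha>^q + 1 = 0" and "\<beta> \<noteq> 0"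
  defines "t \<equiv> (\<alpha> - (1/\<beta>)^q * a0) / \<beta>"
  shows "t + t^q = 0"
proof -
  let ?d = "\<alpha> - (1/\<beta>)^q * a0"
  have bq: "\<beta>^q \<noteq> 0"
    using assms(2) conj_nonzero by blast
  have dq: "?d^q = \<alpha>^q - a0^q / \<beta>"
    by (simp add: conj_diff power_mult_distrib conj_conj)
  have "?d * \<beta>^q + ?d^q * \<beta> = (\<alpha> * \<beta>^q + \<beta> * \<alpha>^q) - (a0 + a0^q)"
    unfolding dq using assms(2) bq by (simp add: algebra_simps power_divide)
  also have "\<dots> = 0"
  proof -
    have "\<alpha> * \<beta>^q + \<beta> * \<alpha>^q = -1" "a0 + a0^q = -1"
      using iso a0_trace by (simp_all add: eq_neg_iff_add_eq_0)
    then show ?thesis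
      by simp
  qed
  finally have "?d * \<beta>^q + ?d^q * \<beta> = 0" .
  then have "(?d * \<beta>^q + ?d^q * \<beta>) / (\<beta> * \<beta>^q) = 0"
    by simp
  then show ?thesis
    unfolding t_def using assms(2) bq by (simp add: power_divide add_divide_distrib)
qed

lemma isotropic_vector_off_frame_plane:
  assumes fr: "unitary_frame e z f m"
    and w: "H w w = 0" "w \<notin> span2 e f"
  obtains \<alpha> \<beta> c where "c \<noteq> 0" "smul c w = lincomb3 e z f (\<alpha>, 1, \<beta>)"
    "\<alpha> * \<beta>^q + \<beta> * \<alpha>^q + 1 = 0"
proof -
  obtain x1 x2 x3 where wx: "w = lincomb3 e z f (x1,x2,x3)"
    using bij_lincomb3[OF fr] by (metis bij_pointE prod_cases3)
  have x2: "x2 \<noteq> 0"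
  proof
    assume "x2 = 0"
    then have "w = vadd (smul x1 e) (smul x3 f)"
      unfolding wx lincomb3_triple by (cases e; cases z; cases f) simp
    then show False
      using w(2) span2_mem by metis
  qed
  have "m * H (x1,x2,x3) (x1,x2,x3) = 0"
    using w(1) H_lincomb3[OF fr] wx by simp
  then have "(x1 * x3^q + x3 * x1^q + x2 * x2^q) / (x2 * x2^q) = 0"
    using unitary_frameD(10)[OF fr] by simp
  then have "(x1/x2) * (x3/x2)^q + (x3/x2) * (x1/x2)^q + 1 = 0"
    using x2 conj_nonzero[OF x2] by (simp add: power_divide add_divide_distrib)
  moreover have "smul (1/x2) w = lincomb3 e z f (x1/x2, 1, x3/x2)"
    unfolding wx lincomb3_smul[symmetric] using x2 by simp
  moreover have "1/x2 \<noteq> 0"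
    using x2 by simp
  ultimately show ?thesis
    using that by blast
qed

lemma exists_unitary_frame_through_point:
  assumes fr: "unitary_frame e z f m"
    and w: "H w w = 0" "w \<notin> span2 e f"
  shows "\<exists>e' f'. unitary_frame e' z f' m \<and> span2 e' f' = span2 e f \<and> span1 e' = span1 e
           \<and> span1 (lincomb3 e' z f' (a0,1,1)) = span1 w"
proof -
  obtain \<alpha> \<beta> c where c: "c \<noteq> 0" "smul c w = lincomb3 e z f (\<alpha>, 1, \<beta>)"
      and iso: "\<alpha> * \<beta>^q + \<beta> * \<alpha>^q + 1 = 0"
    using isotropic_vector_off_frame_plane[OF fr w] .
  have \<beta>: "\<beta> \<noteq> 0"
    using iso q_ge_2 by auto
  define \<kappa> where "\<kappa> = (1/\<beta>)^q"
  define t where "t = (\<alpha> - \<kappa> * a0) / \<beta>"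
  have \<kappa>: "\<kappa> * \<beta>^q = 1" "\<kappa> \<noteq> 0"
    unfolding \<kappa>_def using \<beta> conj_nonzero[OF \<beta>] by (simp_all add: power_divide)
  have t: "t + t^q = 0"
    unfolding t_def \<kappa>_def using renormalising_shift_trace_0[OF iso \<beta>] by simp
  define e' where "e' = smul \<kappa> e"
  define f' where "f' = smul \<beta> (vadd f (smul t e))"
  have fr': "unitary_frame e' z f' m"
    unfolding e'_def f'_def by (rule unitary_frame_renormalise[OF fr \<kappa>(1) t])
  have "f' = vadd (smul (\<beta> * t) e) (smul \<beta> f)"
    unfolding f'_def by (cases e; cases f) (simp add: algebra_simps)
  then have "span2 e' f' = span2 e f"
    using span2_eq_span2[OF unitary_frame_lin_indep2[OF fr] unitary_frame_lin_indep2[OF fr']]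
      span2_mem[of \<kappa> e 0 f] span2_mem[of "\<beta> * t" e \<beta> f] unfolding e'_def by simp
  moreover have "span1 e' = span1 e"
    unfolding e'_def using span1_smul[OF \<kappa>(2)] .
  moreover have "smul c w = lincomb3 e' z f' (a0,1,1)"
  proof -
    have "\<alpha> = a0 * \<kappa> + \<beta> * t"
      unfolding t_def using \<beta> by simp
    then show ?thesis
      unfolding c(2) e'_def f'_def lincomb3_triple
      by (cases e; cases z; cases f) (simp add: algebra_simps)
  qed
  then have "span1 (lincomb3 e' z f' (a0,1,1)) = span1 w"
    using span1_smul[OF c(1), of w] by simp
  ultimately show ?thesis
    using fr' by blast
qed

lemma span2_in_nondeg_two_spacesI:
  assumes "lin_indep2 u v" "\<And>x. x \<in> span2 u v \<Longrightarrow> H x u = 0 \<Longrightarrow> H x v = 0 \<Longrightarrow> x = vzero"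
  shows "span2 u v \<in> nondeg_two_spaces q"
  unfolding nondeg_two_spaces_def two_spaces_def using assms span2_left span2_right by blast

lemma PGammaU_map_of_frames:
  assumes fr: "unitary_frame e z f m" and fr': "unitary_frame e' z' f' m'"
  obtains g where "g \<in> PGammaU q" "g ` points_on q (span2 e f) = points_on q (span2 e' f')"
    "\<And>c. g (span1 (lincomb3 e z f c)) = span1 (lincomb3 e' z' f' c)"
proof -
  define \<Phi> where "\<Phi> = lincomb3 e' z' f' \<circ> inv_into UNIV (lincomb3 e z f)"
  have sl: "semilinear_pres q \<Phi>"
    unfolding \<Phi>_def using linear_similitude_comp_inv[OF linear_similitude_lincomb3[OF fr]
        linear_similitude_lincomb3[OF fr']] by (rule linear_similitude_semilinear_pres)
  have \<Phi>: "\<Phi> (lincomb3 e z f c) = lincomb3 e' z' f' c" for c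
    unfolding \<Phi>_def using inj_lincomb3[OF fr] by simp
  then have "\<Phi> ` span2 e f = span2 e' f'"
    using semilinear_pres_image_span2[OF sl, of e f] by (metis lincomb3_first lincomb3_third)
  then have "(\<lambda>P. \<Phi> ` P) ` points_on q (span2 e f) = points_on q (span2 e' f')"
    using semilinear_pres_points_on[OF sl] by simp
  moreover have "\<Phi> ` span1 (lincomb3 e z f c) = span1 (lincomb3 e' z' f' c)" for c
    using semilinear_pres_image_span1[OF sl] \<Phi> by simp
  moreover have "(\<lambda>P. \<Phi> ` P) \<in> PGammaU q"
    unfolding PGammaU_def using sl by blast
  ultimately show ?thesis
    by (intro that[of "\<lambda>P. \<Phi> ` P"]) simp_all
qed

section \<open>Blocks of the unital\<close>

definition base_plane :: "'a vec3 set" where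
  "base_plane = span2 (1,0,0) (0,0,1)"

lemma mem_base_plane_iff: "(a,b,c) \<in> base_plane \<longleftrightarrow> b = 0"
proof
  assume "b = 0"
  then have "(a,b,c) = vadd (smul a (1,0,0)) (smul c (0,0,1))"
    by simp
  then show "(a,b,c) \<in> base_plane"
    unfolding base_plane_def by (metis span2_mem)
qed (auto simp: base_plane_def span2_def)

lemma span1_subset_base_plane_iff: "span1 v \<subseteq> base_plane \<longleftrightarrow> v \<in> base_plane"
  using span1_self span1_subset_span2 unfolding base_plane_def by blast

lemma base_plane_nondeg: "base_plane \<in> nondeg_two_spaces q"
  unfolding base_plane_def
proof (rule span2_in_nondeg_two_spacesI)
  show "lin_indep2 (1,0,0) (0,0,1::'a)"
    unfolding lin_indep2_def by (simp add: vzero_def)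
  show "x = vzero" if "x \<in> span2 (1,0,0) (0,0,1)" "H x (1,0,0) = 0" "H x (0,0,1) = 0" for x
    using that mem_base_plane_iff[of "fst x" "fst (snd x)" "snd (snd x)"] q_ge_2
    unfolding base_plane_def by (cases x) (simp add: vzero_def)
qed

lemma isotropic_point_on_base_plane:
  assumes "(a,0,c) \<noteq> vzero" "H (a,0,c) (a,0,c) = 0"
  shows "span1 (a,0,c) = span1 (0,0,1) \<or> (\<exists>d. d + d^q = 0 \<and> span1 (a,0,c) = span1 (1,0,d))"
proof (cases "a = 0")
  case True
  then have "c \<noteq> 0"
    using assms(1) by (simp add: vzero_def)
  then show ?thesis
    using True span1_smul[of c "(0,0,1)"] by simp
next
  case False
  have "(c/a) + (c/a)^q = (a * c^q + c * a^q) / (a * a^q)"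
    using False conj_nonzero[OF False] by (simp add: power_divide field_simps)
  also have "\<dots> = 0"
    using assms(2) q_ge_2 by simp
  finally have "c/a + (c/a)^q = 0" .
  moreover have "span1 (a,0,c) = span1 (1,0,c/a)"
    using False span1_smul[OF False, of "(1,0,c/a)"] by simp
  ultimately show ?thesis
    by blast
qed

lemma points_on_base_plane:
  "points_on q base_plane = insert (span1 (0,0,1)) ((\<lambda>c. span1 (1,0,c)) ` {c. c + c^q = 0})"
proof (intro Set.set_eqI iffI)
  fix P assume "P \<in> points_on q base_plane"
  then obtain v where v: "P = span1 v" "v \<noteq> vzero" "H v v = 0" "v \<in> base_plane"
    unfolding points_on_def iso_points_def using span1_subset_base_plane_iff by blast
  moreover obtain a b c where "v = (a,b,c)"
    by (cases v)
  ultimately have "P = span1 (a,0,c)" "(a,0,c) \<noteq> vzero" "H (a,0,c) (a,0,c) = 0"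
    using mem_base_plane_iff by auto
  then show "P \<in> insert (span1 (0,0,1)) ((\<lambda>c. span1 (1,0,c)) ` {c. c + c^q = 0})"
    using isotropic_point_on_base_plane by blast
next
  fix P :: "'a vec3 set"
  assume "P \<in> insert (span1 (0,0,1)) ((\<lambda>c. span1 (1,0,c)) ` {c. c + c^q = 0})"
  then obtain v where v: "P = span1 v" "v \<noteq> vzero" "H v v = 0" "v \<in> base_plane"
  proof (elim insertE imageE)
    assume "P = span1 (0,0,1)"
    then show thesis
      using that[of "(0,0,1)"] q_ge_2 by (simp add: vzero_def mem_base_plane_iff)
  next
    fix c assume "c \<in> {c. c + c^q = 0}" "P = span1 (1,0,c)"
    then show thesis
      using that[of "(1,0,c)"] q_ge_2 by (simp add: vzero_def mem_base_plane_iff add.commute)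
  qed
  then show "P \<in> points_on q base_plane"
    unfolding points_on_def iso_points_def using span1_subset_base_plane_iff by blast
qed

lemma card_points_on_base_plane: "card (points_on q base_plane) = Suc q"
proof -
  let ?K = "{c::'a. c + c^q = 0}"
  have "inj (\<lambda>c::'a. span1 (1,0,c))"
  proof (rule injI)
    fix c c' :: 'a assume "span1 (1,0,c) = span1 (1,0,c')"
    then obtain d where "(1,0,c') = smul d (1,0,c)"
      using span1_self mem_span1_iff by metis
    then show "c = c'"
      by simp
  qed
  then have "card ((\<lambda>c. span1 (1,0,c)) ` ?K) = q"
    using card_trace_kernel by (simp add: card_image inj_on_subset[of _ UNIV])
  moreover have "span1 (0,0,1) \<notin> (\<lambda>c. span1 (1,0,c)) ` ?K"
  proof
    assume "span1 (0,0,1) \<in> (\<lambda>c. span1 (1,0,c)) ` ?K"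
    then obtain c d where "(0,0,1) = smul d (1,0,c::'a)"
      using span1_self mem_span1_iff by (metis (no_types, lifting) imageE)
    then show False
      by auto
  qed
  ultimately show ?thesis
    unfolding points_on_base_plane by simp
qed

lemma points_on_frame:
  assumes "unitary_frame e z f m"
  shows "(\<lambda>P. lincomb3 e z f ` P) ` points_on q base_plane = points_on q (span2 e f)"
proof -
  have sl: "semilinear_pres q (lincomb3 e z f)"
    by (rule linear_similitude_semilinear_pres[OF linear_similitude_lincomb3[OF assms]])
  have "lincomb3 e z f ` base_plane = span2 e f"
    unfolding base_plane_def semilinear_pres_image_span2[OF sl] lincomb3_first lincomb3_third ..
  then show ?thesis
    using semilinear_pres_points_on[OF sl, of base_plane] by simp
qed

lemma card_points_on_frame:
  assumes "unitary_frame e z f m"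
  shows "card (points_on q (span2 e f)) = Suc q"
proof -
  have "inj_on (\<lambda>P. lincomb3 e z f ` P) (points_on q base_plane)"
    using inj_on_image[of "lincomb3 e z f"] inj_lincomb3[OF assms] by (metis inj_on_subset top_greatest)
  then have "card ((\<lambda>P. lincomb3 e z f ` P) ` points_on q base_plane) = card (points_on q base_plane)"
    by (rule card_image)
  then show ?thesis
    using points_on_frame[OF assms] card_points_on_base_plane by simp
qed

lemma unital_block_frame:
  assumes "\<gamma> \<in> unital q"
  obtains e z f m where "unitary_frame e z f m" "\<gamma> = points_on q (span2 e f)"
proof -
  obtain L u v where L: "\<gamma> = points_on q L" "L \<in> nondeg_two_spaces q" "L = span2 u v" "lin_indep2 u v"
    using assms unfolding unital_eq nondeg_two_spaces_def two_spaces_def by blast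
  obtain e where "e \<in> L" "e \<noteq> vzero" "H e e = 0"
    using exists_isotropic_in_span2[OF L(4)] L(3) by blast
  then obtain z f m where "unitary_frame e z f m" "span2 e f = L"
    using exists_unitary_frame[OF L(2)] by blast
  then show ?thesis
    using L(1) that by blast
qed

lemma unital_antiflag_frame:
  assumes "\<gamma> \<in> unital q" "a \<in> \<gamma>" "b \<in> iso_points q - \<gamma>"
  obtains e z f m where "unitary_frame e z f m" "\<gamma> = points_on q (span2 e f)" "a = span1 e"
    "b = span1 (lincomb3 e z f (a0,1,1))"
proof -
  obtain L where L: "\<gamma> = points_on q L" "L \<in> nondeg_two_spaces q"
    using assms unfolding unital_eq by blast
  obtain e where e: "a = span1 e" "e \<noteq> vzero" "H e e = 0" "a \<subseteq> L"
    using assms(2) L(1) unfolding points_on_def iso_points_def by blast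
  obtain z f m where fr: "unitary_frame e z f m" "span2 e f = L"
    using exists_unitary_frame[OF L(2) _ e(2,3)] e(1,4) span1_self by blast
  obtain w where w: "b = span1 w" "H w w = 0"
    using assms(3) unfolding iso_points_def by blast
  have "w \<notin> span2 e f"
  proof
    assume "w \<in> span2 e f"
    then have "b \<in> \<gamma>"
      using assms(3) w(1) fr(2) L(1) span1_subset_span2 unfolding points_on_def by blast
    then show False
      using assms(3) by blast
  qed
  then obtain e' f' where F: "unitary_frame e' z f' m" "span2 e' f' = span2 e f" "span1 e' = span1 e"
      "span1 (lincomb3 e' z f' (a0,1,1)) = span1 w"
    using exists_unitary_frame_through_point[OF fr(1) w(2)] by blast
  show ?thesis
    by (rule that[OF F(1)]) (use F(2-4) L(1) fr(2) e(1) w(1) in simp_all)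
qed

lemma points_on_eq_if_two_common_points:
  fixes L1 L2 :: "'a vec3 set"
  assumes "L1 \<in> nondeg_two_spaces q" "L2 \<in> nondeg_two_spaces q"
    "P \<in> points_on q L1 \<inter> points_on q L2" "Q \<in> points_on q L1 \<inter> points_on q L2" "P \<noteq> Q"
  shows "L1 = L2"
proof -
  obtain u1 v1 u2 v2 where uv: "L1 = span2 u1 v1" "lin_indep2 u1 v1" "L2 = span2 u2 v2" "lin_indep2 u2 v2"
    using assms(1,2) unfolding nondeg_two_spaces_def two_spaces_def by blast
  obtain p p' where p: "P = span1 p" "p \<noteq> vzero" "Q = span1 p'" "p' \<noteq> vzero"
    using assms(3,4) unfolding points_on_def iso_points_def by blast
  have "p \<in> L1" "p \<in> L2" "p' \<in> L1" "p' \<in> L2"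
    using assms(3,4) p span1_self unfolding points_on_def by blast+
  moreover have "lin_indep2 p p'"
    using lin_indep2_if_span1_neq p assms(5) by blast
  ultimately have "span2 p p' = L1" "span2 p p' = L2"
    using span2_eq_span2[of u1 v1 p p'] span2_eq_span2[of u2 v2 p p'] uv by simp_all
  then show ?thesis
    by simp
qed

abbreviation \<U> :: "'a vec3 set set set" where
  "\<U> \<equiv> unital q"

abbreviation \<V> :: "'a vec3 set set" where
  "\<V> \<equiv> iso_points q"

lemma card_unital_block: "\<gamma> \<in> \<U> \<Longrightarrow> card \<gamma> = q + 1"
  by (metis unital_block_frame card_points_on_frame Suc_eq_plus1)

lemma unital_block_subset: "\<gamma> \<in> \<U> \<Longrightarrow> \<gamma> \<subseteq> \<V>"
  unfolding unital_eq points_on_def by blast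

lemma card_unital_blocks_Int_le_1:
  assumes "A \<in> \<U>" "B \<in> \<U>" "A \<noteq> B"
  shows "card (A \<inter> B) \<le> 1"
proof -
  obtain L1 L2 :: "'a vec3 set" where L: "A = points_on q L1" "L1 \<in> nondeg_two_spaces q"
      "B = points_on q L2" "L2 \<in> nondeg_two_spaces q"
    using assms(1,2) unfolding unital_eq by blast
  have "P = Q" if "P \<in> A \<inter> B" "Q \<in> A \<inter> B" for P Q
    using points_on_eq_if_two_common_points[OF L(2,4)] that L(1,3) assms(3) by blast
  then show ?thesis
    using card_le_Suc0_iff_eq[of "A \<inter> B"] by simp
qed

lemma johnson_dist_unital_blocks:
  assumes "A \<in> \<U>" "B \<in> \<U>"
  shows "johnson_dist \<V> (q + 1) A B = q + 1 - card (A \<inter> B)"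
proof -
  have "johnson_dist \<V> (q + 1) A B = card (A - B)"
    by (rule johnson_dist_eq_card_Diff) (use assms unital_block_subset card_unital_block in simp_all)
  also have "\<dots> = card A - card (A \<inter> B)"
    by (rule card_Diff_subset_Int) simp
  finally show ?thesis
    using card_unital_block[OF assms(1)] by simp
qed

text \<open>The blocks of the planes x_2 = 0 and \<langle>(1,0,0), (0,1,1)\<rangle> both contain \<langle>(1,0,0)\<rangle>; only the
  second contains \<langle>(a0,1,1)\<rangle>.\<close>
lemma exists_unital_blocks_meeting_in_one_point:
  "\<exists>A\<in>\<U>. \<exists>B\<in>\<U>. A \<noteq> B \<and> card (A \<inter> B) = 1"
proof -
  let ?L = "span2 (1,0,0) (0,1,1::'a)"
  have L: "?L \<in> nondeg_two_spaces q"
  proof (rule span2_in_nondeg_two_spacesI)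
    show "lin_indep2 (1,0,0) (0,1,1::'a)"
      unfolding lin_indep2_def by (simp add: vzero_def)
    show "x = vzero" if x: "x \<in> ?L" and orth: "H x (1,0,0) = 0" "H x (0,1,1) = 0" for x
    proof -
      obtain a b where "x = vadd (smul a (1,0,0)) (smul b (0,1,1))"
        using x unfolding span2_def by blast
      then show ?thesis
        using orth q_ge_2 by (simp add: vzero_def)
    qed
  qed
  have A: "points_on q base_plane \<in> \<U>" and B: "points_on q ?L \<in> \<U>"
    using base_plane_nondeg L unfolding unital_eq by blast+
  have "(1,0,0) \<noteq> (vzero :: 'a vec3)" "H (1,0,0) (1,0,0) = 0"
      "(a0,1,1) \<noteq> vzero" "H (a0,1,1) (a0,1,1) = 0"
    using q_ge_2 a0_trace by (simp_all add: vzero_def add.commute add.left_commute)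
  then have iso: "span1 (1,0,0) \<in> \<V>" "span1 (a0,1,1) \<in> \<V>"
    unfolding iso_points_def by blast+
  have common: "span1 (1,0,0) \<in> points_on q base_plane \<inter> points_on q ?L"
    using iso(1) span1_subset_base_plane_iff[of "(1,0,0)"] span1_subset_span2[OF span2_left[of "(1,0,0)" "(0,1,1)"]]
    unfolding points_on_def by (auto simp: mem_base_plane_iff)
  have only_L: "span1 (a0,1,1) \<in> points_on q ?L - points_on q base_plane"
    using iso(2) span1_subset_span2[OF span2_mem[of a0 "(1,0,0)" 1 "(0,1,1)"]]
    unfolding points_on_def by (simp add: span1_subset_base_plane_iff mem_base_plane_iff)
  have ne: "points_on q base_plane \<noteq> points_on q ?L"
    using only_L by blast
  have "points_on q base_plane \<inter> points_on q ?L \<noteq> {}"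
    using common by blast
  then have "card (points_on q base_plane \<inter> points_on q ?L) = 1"
    using card_unital_blocks_Int_le_1[OF A B ne] by (simp add: le_Suc_eq card_eq_0_iff)
  then show ?thesis
    using A B ne by blast
qed

lemma PGammaU_preserves_unital:
  assumes "g \<in> PGammaU q"
  shows "(\<lambda>\<gamma>. g ` \<gamma>) ` \<U> = \<U>"
proof -
  obtain f where g: "g = (\<lambda>P. f ` P)" "semilinear_pres q f"
    using assms unfolding PGammaU_def by blast
  have "(\<lambda>\<gamma>. g ` \<gamma>) ` \<U> \<subseteq> \<U>"
  proof
    fix \<gamma> assume "\<gamma> \<in> (\<lambda>\<gamma>. g ` \<gamma>) ` \<U>"
    then obtain L where "\<gamma> = g ` points_on q L" "L \<in> nondeg_two_spaces q"
      unfolding unital_eq by blast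
    then show "\<gamma> \<in> \<U>"
      unfolding unital_eq g(1) semilinear_pres_points_on[OF g(2)]
      using semilinear_pres_nondeg_two_spaces[OF g(2)] by blast
  qed
  moreover have "inj f"
    using g(2) unfolding semilinear_pres_def by (simp add: bij_is_inj)
  then have "inj g"
    unfolding g(1) by (simp add: inj_def inj_image_eq_iff)
  then have "inj_on (\<lambda>\<gamma>. g ` \<gamma>) \<U>"
    by (simp add: inj_on_def inj_image_eq_iff)
  ultimately show ?thesis
    by (intro card_subset_eq) (simp_all add: card_image)
qed

theorem strongly_incidence_transitive_unital:
  "strongly_incidence_transitive (PGammaU q) \<V> \<U>"
  unfolding strongly_incidence_transitive_def
proof (intro conjI ballI)
  show "(\<lambda>\<gamma>. g ` \<gamma>) ` \<U> = \<U>" if "g \<in> PGammaU q" for g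
    using PGammaU_preserves_unital[OF that] .
next
  fix \<gamma>1 \<gamma>2
  assume "\<gamma>1 \<in> \<U>" "\<gamma>2 \<in> \<U>"
  obtain e z f m where fr: "unitary_frame e z f m" "\<gamma>1 = points_on q (span2 e f)"
    using unital_block_frame[OF \<open>\<gamma>1 \<in> \<U>\<close>] by blast
  obtain e' z' f' m' where fr': "unitary_frame e' z' f' m'" "\<gamma>2 = points_on q (span2 e' f')"
    using unital_block_frame[OF \<open>\<gamma>2 \<in> \<U>\<close>] by blast
  obtain g where "g \<in> PGammaU q" "g ` points_on q (span2 e f) = points_on q (span2 e' f')"
    by (rule PGammaU_map_of_frames[OF fr(1) fr'(1)])
  then show "\<exists>g\<in>PGammaU q. g ` \<gamma>1 = \<gamma>2"
    using fr(2) fr'(2) by blast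
next
  fix \<gamma> a b a' b'
  assume \<gamma>: "\<gamma> \<in> \<U>" and "a \<in> \<gamma>" "b \<in> \<V> - \<gamma>" "a' \<in> \<gamma>" "b' \<in> \<V> - \<gamma>"
  obtain e z f m where fr: "unitary_frame e z f m" "\<gamma> = points_on q (span2 e f)" "a = span1 e"
      "b = span1 (lincomb3 e z f (a0,1,1))"
    using unital_antiflag_frame[OF \<gamma> \<open>a \<in> \<gamma>\<close> \<open>b \<in> \<V> - \<gamma>\<close>] by blast
  obtain e' z' f' m' where fr': "unitary_frame e' z' f' m'" "\<gamma> = points_on q (span2 e' f')" "a' = span1 e'"
      "b' = span1 (lincomb3 e' z' f' (a0,1,1))"
    using unital_antiflag_frame[OF \<gamma> \<open>a' \<in> \<gamma>\<close> \<open>b' \<in> \<V> - \<gamma>\<close>] by blast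
  obtain g where g: "g \<in> PGammaU q" "g ` points_on q (span2 e f) = points_on q (span2 e' f')"
      "\<And>c. g (span1 (lincomb3 e z f c)) = span1 (lincomb3 e' z' f' c)"
    using PGammaU_map_of_frames[OF fr(1) fr'(1)] by blast
  have "g a = a'"
    using g(3)[of "(1,0,0)"] fr(3) fr'(3) by (simp add: lincomb3_first)
  moreover have "g b = b'" "g ` \<gamma> = \<gamma>"
    using g(2,3) fr(2,4) fr'(2,4) by simp_all
  ultimately show "\<exists>g\<in>PGammaU q. g ` \<gamma> = \<gamma> \<and> g a = a' \<and> g b = b'"
    using g(1) by blast
qed

theorem min_dist_unital: "min_dist \<V> (q + 1) \<U> = q"
proof -
  let ?D = "{johnson_dist \<V> (q + 1) A B | A B. A \<in> \<U> \<and> B \<in> \<U> \<and> A \<noteq> B}"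
  have "finite ?D"
    by (rule finite_subset[of _ "(\<lambda>(A,B). johnson_dist \<V> (q + 1) A B) ` UNIV"]) auto
  moreover have "q \<le> d" if d: "d \<in> ?D" for d
  proof -
    obtain A B where "d = johnson_dist \<V> (q + 1) A B" "A \<in> \<U>" "B \<in> \<U>" "A \<noteq> B"
      using d by blast
    moreover from this have "card (A \<inter> B) \<le> 1"
      using card_unital_blocks_Int_le_1 by blast
    ultimately show ?thesis
      using johnson_dist_unital_blocks by simp
  qed
  moreover have "q \<in> ?D"
  proof -
    obtain A B where "A \<in> \<U>" "B \<in> \<U>" "A \<noteq> B" "card (A \<inter> B) = 1"
      using exists_unital_blocks_meeting_in_one_point by blast
    moreover from this have "johnson_dist \<V> (q + 1) A B = q"
      using johnson_dist_unital_blocks by simp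
    ultimately show ?thesis
      by (metis (mono_tags, lifting) mem_Collect_eq)
  qed
  ultimately show ?thesis
    unfolding min_dist_def by (intro Min_eqI) auto
qed

end

theorem lemma8p2:
  fixes q :: nat
    and \<Gamma> :: "'a::{field,finite} vec3 set set set"
  assumes "\<exists>p k. prime p \<and> k > 0 \<and> q = p ^ k"
    and "card (UNIV :: 'a set) = q ^ 2"
    and "\<Gamma> = unital q"
  shows "strongly_incidence_transitive (PGammaU q) (iso_points q) \<Gamma>
       \<and> min_dist (iso_points q) (q + 1) \<Gamma> = q"
proof -
  interpret unitary_field q "TYPE('a)"
    using unitary_fieldI[OF assms(1,2)] .
  show ?thesis
    using strongly_incidence_transitive_unital min_dist_unital assms(3) by simp
qed

end
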